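(* Let $D$ be a squarefree integer and let $q>3$ be a prime dividing $D$. Then $H_D^{(q)}=\{kP : k\text{ odd and } x(kP)\equiv -18\pmod q\}$; in particular $H_D^{(q)}$ does not depend on $D$.
   Context: $C_D\subset\mathbb{P}^4$ is the curve over $\mathbb{Q}$ given by $X_0^2-2X_1^2+X_2^2=0$, $X_1^2-2X_2^2+DX_3^2=0$, $X_2^2-2DX_3^2+X_4^2=0$; $C_D(\mathbb{F}_q)$ denotes the $\mathbb{F}_q$-points of the variety defined by these equations reduced mod $q$. $E^{(1)}: y^2=x(x+2)(x+6)$, $P=(6,24)\in E^{(1)}(\mathbb{Q})$, $H=\{kP: k\text{ odd}\}$, and $\phi:C_D\to E^{(1)}$ is $\phi([x_0:\dots:x_4])=(6x_0^2/x_4^2,\,24x_0x_1x_2/x_4^3)$, with $\phi_q$ its reduction mod $q$. $\mathrm{red}_q:E^{(1)}(\mathbb{Q})\to E^{(1)}(\mathbb{F}_q)$ is reduction mod $q$, and $H_D^{(q)}:=\{R\in H : \mathrm{red}_q(R)\in\phi_q(C_D(\mathbb{F}_q))\}$. The condition $x(kP)\equiv-18\pmod q$ means the reduction of $kP$ has $x$-coordinate $-18\in\mathbb{F}_q$. *)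

theory Defs
  imports Complex_Main "HOL-Computational_Algebra.Squarefree" "HOL-Number_Theory.Cong"
begin

(* Points of E^(1): y^2 = x(x+2)(x+6) = x^3 + 8x^2 + 12x over Q.
   None is the point at infinity O. *)
type_synonym ratpt = "(rat \<times> rat) option"

definition on_E1 :: "ratpt \<Rightarrow> bool" where
  "on_E1 R = (case R of None \<Rightarrow> True | Some (x, y) \<Rightarrow> y^2 = x * (x + 2) * (x + 6))"

definition ec_neg :: "ratpt \<Rightarrow> ratpt" where
  "ec_neg R = (case R of None \<Rightarrow> None | Some (x, y) \<Rightarrow> Some (x, - y))"

definition ec_add :: "ratpt \<Rightarrow> ratpt \<Rightarrow> ratpt" where
  "ec_add R S = (case R of None \<Rightarrow> S | Some (x1, y1) \<Rightarrow>
     (case S of None \<Rightarrow> R | Some (x2, y2) \<Rightarrow>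
       (if x1 = x2 \<and> y1 = - y2 then None
        else let l = (if x1 = x2 then (3 * x1^2 + 16 * x1 + 12) / (2 * y1)
                      else (y2 - y1) / (x2 - x1));
                 x3 = l^2 - 8 - x1 - x2
             in Some (x3, l * (x1 - x3) - y1))))"

definition ec_mult :: "int \<Rightarrow> ratpt \<Rightarrow> ratpt" where
  "ec_mult k R = (if k \<ge> 0 then (ec_add R ^^ nat k) None
                  else ec_neg ((ec_add R ^^ nat (- k)) None))"

definition P0 :: ratpt where "P0 = Some (6, 24)"

definition H :: "ratpt set" where "H = {ec_mult k P0 | k. odd k}"

(* Elements of F_q are represented by integers in {0..<q}. *)

definition fq_div :: "int \<Rightarrow> int \<Rightarrow> int \<Rightarrow> int" where
  "fq_div q a b = (THE c. c \<in> {0..<q} \<and> [b * c = a] (mod q))"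

definition q_integral :: "int \<Rightarrow> rat \<Rightarrow> bool" where
  "q_integral q r = (\<not> q dvd snd (quotient_of r))"

definition rat_mod :: "int \<Rightarrow> rat \<Rightarrow> int" where
  "rat_mod q r = fq_div q (fst (quotient_of r)) (snd (quotient_of r))"

definition red :: "int \<Rightarrow> ratpt \<Rightarrow> (int \<times> int) option" where
  "red q R = (case R of None \<Rightarrow> None | Some (x, y) \<Rightarrow>
     (if q_integral q x \<and> q_integral q y then Some (rat_mod q x, rat_mod q y) else None))"

(* F_q-points of C_D, given by representatives (x_0,...,x_4) in F_q^5 \ {0}
   (entries v 0, ..., v 4; v i = 0 for i > 4) *)
definition CD_Fq :: "int \<Rightarrow> int \<Rightarrow> (nat \<Rightarrow> int) set" where
  "CD_Fq D q = {v. (\<forall>i\<le>4. v i \<in> {0..<q}) \<and> (\<forall>i>4. v i = 0) \<and> (\<exists>i\<le>4. v i \<noteq> 0) \<and>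
      [v 0 ^ 2 - 2 * v 1 ^ 2 + v 2 ^ 2 = 0] (mod q) \<and>
      [v 1 ^ 2 - 2 * v 2 ^ 2 + D * v 3 ^ 2 = 0] (mod q) \<and>
      [v 2 ^ 2 - 2 * D * v 3 ^ 2 + v 4 ^ 2 = 0] (mod q)}"

definition phi_q :: "int \<Rightarrow> (nat \<Rightarrow> int) \<Rightarrow> (int \<times> int) option" where
  "phi_q q v = Some (fq_div q (6 * v 0 ^ 2) (v 4 ^ 2), fq_div q (24 * v 0 * v 1 * v 2) (v 4 ^ 3))"

definition phi_q_image :: "int \<Rightarrow> int \<Rightarrow> (int \<times> int) option set" where
  "phi_q_image D q = {phi_q q v | v. v \<in> CD_Fq D q \<and> v 4 \<noteq> 0}"

definition H_D_q :: "int \<Rightarrow> int \<Rightarrow> ratpt set" where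
  "H_D_q D q = {R \<in> H. red q R \<in> phi_q_image D q}"

end

theory Submission
  imports Defs
begin

text \<open>Modulo a prime \<open>q\<close> dividing \<open>D\<close> the equations of \<open>C\<^sub>D\<close> read \<open>x\<^sub>1\<^sup>2 = 2x\<^sub>2\<^sup>2\<close>,
  \<open>x\<^sub>0\<^sup>2 = 3x\<^sub>2\<^sup>2\<close>, \<open>x\<^sub>4\<^sup>2 = -x\<^sub>2\<^sup>2\<close>, so every point of \<open>\<phi>\<^sub>q(C\<^sub>D(\<bbbF>\<^sub>q))\<close> has
  \<open>x = 6x\<^sub>0\<^sup>2/x\<^sub>4\<^sup>2 = -18\<close>. Conversely, by 2-descent every odd multiple of \<open>P\<close> has
  \<open>x \<in> 6\<rat>\<^sup>2\<close>, \<open>x + 2 \<in> 2\<rat>\<^sup>2\<close>, \<open>x + 6 \<in> 3\<rat>\<^sup>2\<close> (adding \<open>P\<close> multiplies the class by that of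
  \<open>P\<close>, and the even multiples have trivial class). If moreover \<open>x \<equiv> -18 (mod q)\<close>, reducing
  these relations shows that \<open>-3\<close>, \<open>-8\<close> and \<open>-4\<close> are squares modulo \<open>q\<close>, and from their
  square roots one writes down a point of \<open>C\<^sub>D(\<bbbF>\<^sub>q)\<close> over the reduction of \<open>kP\<close>; the free
  sign of \<open>x\<^sub>0\<close> matches the \<open>y\<close>-coordinate.\<close>

section \<open>The 2-descent classes of the multiples of \<open>P\<close>\<close>

lemma rat_square_neq_twice_odd:
  fixes t :: rat and m :: int
  assumes "odd m"
  shows "t^2 \<noteq> of_int (2 * m)"
proof
  assume sq: "t^2 = of_int (2 * m)"
  obtain n d where nd: "quotient_of t = (n, d)" by (cases "quotient_of t")
  have d0: "d > 0" and cop: "coprime n d" and t: "t = of_int n / of_int d"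
    using quotient_of_denom_pos[OF nd] quotient_of_coprime[OF nd] quotient_of_div[OF nd] by auto
  have "(of_int (n^2) :: rat) = of_int (2 * m * d^2)"
    using sq d0 unfolding t by (simp add: field_simps power2_eq_square)
  then have nsq: "n^2 = 2 * m * d^2" by (simp only: of_int_eq_iff)
  then have "even n" by (metis dvd_triv_left even_power mult.assoc)
  then obtain k where k: "n = 2 * k" ..
  have "2 * k^2 = m * d^2" using nsq unfolding k by (simp add: power_mult_distrib)
  then have "even d" using \<open>odd m\<close> by (metis dvd_triv_left even_mult_iff even_power)
  with \<open>even n\<close> cop show False by fastforce
qed

definition scaled_square :: "rat \<Rightarrow> rat \<Rightarrow> bool" where
  "scaled_square c u \<longleftrightarrow> (\<exists>t. u = c * t^2)"

lemma scaled_square_mult: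
  assumes "scaled_square c u" and "scaled_square d (u * v)" and "u \<noteq> 0"
  shows "scaled_square (c * d) v"
proof -
  obtain s t where u: "u = c * t^2" and uv: "u * v = d * s^2"
    using assms(1,2) unfolding scaled_square_def by blast
  have "c \<noteq> 0" "t \<noteq> 0" using \<open>u \<noteq> 0\<close> u by auto
  then have "v = c * d * (s / (c * t))^2"
    using uv unfolding u by (simp add: field_simps power2_eq_square)
  then show ?thesis unfolding scaled_square_def ..
qed

lemma scaled_square_cancel_square: "scaled_square (c * e^2) u \<Longrightarrow> scaled_square c u"
  unfolding scaled_square_def by (metis mult.assoc power_mult_distrib)

text \<open>The 2-descent map \<open>E\<^sup>(\<^sup>1\<^sup>)(\<rat>) \<rightarrow> (\<rat>\<^sup>*/\<rat>\<^sup>*\<^sup>2)\<^sup>3\<close>, \<open>(x, y) \<mapsto> (x, x + 2, x + 6)\<close>,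
  takes the value \<open>(c\<^sub>0, c\<^sub>2, c\<^sub>6)\<close> at \<open>R\<close>.\<close>
definition descent_class :: "rat \<Rightarrow> rat \<Rightarrow> rat \<Rightarrow> ratpt \<Rightarrow> bool" where
  "descent_class c0 c2 c6 R \<longleftrightarrow> (\<exists>x y. R = Some (x, y) \<and> y^2 = x * (x + 2) * (x + 6) \<and>
     scaled_square c0 x \<and> scaled_square c2 (x + 2) \<and> scaled_square c6 (x + 6))"

lemma chord_third_intersection:
  fixes x1 x2 y1 y2 l x3 :: "'a::field"
  assumes on1: "y1^2 = x1 * (x1 + 2) * (x1 + 6)" and on2: "y2^2 = x2 * (x2 + 2) * (x2 + 6)"
    and "x1 \<noteq> x2" and l: "l = (y2 - y1) / (x2 - x1)" and x3: "x3 = l^2 - 8 - x1 - x2"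
  shows "z * (z + 2) * (z + 6) - (l * z + (y1 - l * x1))^2 = (z - x1) * (z - x2) * (z - x3)"
proof -
  define \<nu> where "\<nu> = y1 - l * x1"
  define A where "A = 12 - 2 * l * \<nu> - (x1 * x2 + x1 * x3 + x2 * x3)"
  define B where "B = x1 * x2 * x3 - \<nu>^2"
  \<comment> \<open>The choice of \<open>x3\<close> kills the quadratic term, so the difference is affine in \<open>z\<close>;
    it vanishes at \<open>x1\<close> and \<open>x2\<close>.\<close>
  have affine: "z * (z + 2) * (z + 6) - (l * z + \<nu>)^2 - (z - x1) * (z - x2) * (z - x3) = A * z + B" for z
    unfolding A_def B_def x3 by (simp add: algebra_simps power2_eq_square power3_eq_cube)
  have "l * (x2 - x1) = y2 - y1" using \<open>x1 \<noteq> x2\<close> unfolding l by simp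
  then have "l * x2 + \<nu> = y2" unfolding \<nu>_def by (simp add: algebra_simps)
  then have "A * x2 + B = 0" using affine[of x2] on2 by simp
  moreover have "A * x1 + B = 0" using affine[of x1] on1 unfolding \<nu>_def by (simp add: algebra_simps)
  moreover have "A * (x1 - x2) = (A * x1 + B) - (A * x2 + B)" by (simp add: algebra_simps)
  ultimately have "A * (x1 - x2) = 0" by simp
  then have "A = 0" "B = 0" using \<open>x1 \<noteq> x2\<close> \<open>A * x1 + B = 0\<close> by auto
  then show ?thesis using affine[of z] unfolding \<nu>_def by simp
qed

lemma add_P0_descent:
  fixes x y :: rat
  assumes on: "y^2 = x * (x + 2) * (x + 6)" and "x \<noteq> 6"
  obtains x3 y3 where "ec_add P0 (Some (x, y)) = Some (x3, y3)" and "y3^2 = x3 * (x3 + 2) * (x3 + 6)"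
    and "scaled_square 6 (x * x3)" and "scaled_square 2 ((x + 2) * (x3 + 2))"
    and "scaled_square 3 ((x + 6) * (x3 + 6))"
proof -
  define l where "l = (y - 24) / (x - 6)"
  define x3 where "x3 = l^2 - 8 - 6 - x"
  have on_P0: "(24::rat)^2 = 6 * (6 + 2) * (6 + 6)" by simp
  have chord: "z * (z + 2) * (z + 6) - (l * z + (24 - l * 6))^2 = (z - 6) * (z - x) * (z - x3)" for z
    using chord_third_intersection[OF on_P0 on, of l x3] \<open>x \<noteq> 6\<close> unfolding l_def x3_def by auto
  have "ec_add P0 (Some (x, y)) = Some (x3, l * (6 - x3) - 24)"
    using \<open>x \<noteq> 6\<close> unfolding l_def x3_def by (simp add: ec_add_def P0_def Let_def)
  moreover have "(l * (6 - x3) - 24)^2 = x3 * (x3 + 2) * (x3 + 6)"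
    using chord[of x3] by (simp add: algebra_simps power2_eq_square)
  \<comment> \<open>Evaluating the chord identity at the roots \<open>0, -2, -6\<close> of the cubic.\<close>
  moreover have "x * x3 = 6 * ((24 - 6 * l) / 6)^2"
    using chord[of 0] by (simp add: algebra_simps power2_eq_square)
  moreover have "(x + 2) * (x3 + 2) = 2 * ((24 - 8 * l) / 4)^2"
    using chord[of "-2"] by (simp add: algebra_simps power2_eq_square)
  moreover have "(x + 6) * (x3 + 6) = 3 * ((24 - 12 * l) / 6)^2"
    using chord[of "-6"] by (simp add: algebra_simps power2_eq_square)
  ultimately show ?thesis using that unfolding scaled_square_def by blast
qed

lemma descent_class_add_P0:
  assumes "descent_class c0 c2 c6 (Some (x, y))" and "x \<notin> {0, -2, -6, 6}"
  shows "descent_class (c0 * 6) (c2 * 2) (c6 * 3) (ec_add P0 (Some (x, y)))"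
proof -
  have on: "y^2 = x * (x + 2) * (x + 6)" and cls: "scaled_square c0 x" "scaled_square c2 (x + 2)"
      "scaled_square c6 (x + 6)"
    using assms(1) unfolding descent_class_def by auto
  obtain x3 y3 where "ec_add P0 (Some (x, y)) = Some (x3, y3)" "y3^2 = x3 * (x3 + 2) * (x3 + 6)"
    "scaled_square 6 (x * x3)" "scaled_square 2 ((x + 2) * (x3 + 2))" "scaled_square 3 ((x + 6) * (x3 + 6))"
    using add_P0_descent[OF on] assms(2) by auto
  with cls assms(2) show ?thesis
    unfolding descent_class_def by (auto intro: scaled_square_mult)
qed

lemma descent_class_odd_add_P0:
  assumes "descent_class 6 2 3 R"
  shows "ec_add P0 R = None \<or> descent_class 1 1 1 (ec_add P0 R)"
proof -
  obtain x y a c where R: "R = Some (x, y)" and on: "y^2 = x * (x + 2) * (x + 6)"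
    and a: "x = 6 * a^2" and c: "x + 6 = 3 * c^2"
    using assms unfolding descent_class_def scaled_square_def by blast
  show ?thesis
  proof (cases "x = 6")
    case True
    then have "(y - 24) * (y + 24) = 0" using on by (simp add: algebra_simps power2_eq_square)
    then have "y = -24 \<or> y = 24" by (auto simp: eq_neg_iff_add_eq_0)
    moreover have "descent_class 1 1 1 (Some (1/4, 15/8))"
    proof -
      have "scaled_square 1 (1/4)" "scaled_square 1 (1/4 + 2)" "scaled_square 1 (1/4 + 6)"
        unfolding scaled_square_def
        by (auto intro: exI[of _ "1/2"] exI[of _ "3/2"] exI[of _ "5/2"] simp: power2_eq_square)
      moreover have "(15/8 :: rat)^2 = 1/4 * (1/4 + 2) * (1/4 + 6)" by (simp add: power2_eq_square)
      ultimately show ?thesis unfolding descent_class_def by blast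
    qed
    ultimately show ?thesis
      using R True by (auto simp: ec_add_def P0_def Let_def power2_eq_square)
  next
    case False
    have "x \<noteq> 0" using c rat_square_neq_twice_odd[of 1 c] by auto
    moreover have "x \<ge> 0" using a by simp
    ultimately have "descent_class (6 * 6) (2 * 2) (3 * 3) (ec_add P0 R)"
      using descent_class_add_P0[of 6 2 3 x y] assms False unfolding R by auto
    then have "descent_class (1 * 6^2) (1 * 2^2) (1 * 3^2) (ec_add P0 R)" by simp
    then show ?thesis unfolding descent_class_def by (blast intro: scaled_square_cancel_square)
  qed
qed

lemma descent_class_even_add_P0:
  assumes "R = None \<or> descent_class 1 1 1 R"
  shows "descent_class 6 2 3 (ec_add P0 R)"
  using assms
proof
  assume "R = None"
  moreover have "scaled_square 6 6" "scaled_square 2 (6 + 2)" "scaled_square 3 (6 + 6)"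
    unfolding scaled_square_def by (auto intro: exI[of _ 1] exI[of _ 2])
  ultimately show ?thesis by (simp add: ec_add_def P0_def descent_class_def)
next
  assume R: "descent_class 1 1 1 R"
  then obtain x y a b where xy: "R = Some (x, y)" and a: "x = a^2" and b: "x + 2 = b^2"
    unfolding descent_class_def scaled_square_def by auto
  have "x \<noteq> 0" "x \<noteq> 6"
    using a b rat_square_neq_twice_odd[of 1 b] rat_square_neq_twice_odd[of 3 a] by auto
  moreover have "x \<ge> 0" using a by simp
  ultimately have "x \<notin> {0, -2, -6, 6}" by auto
  from descent_class_add_P0[OF _ this, of 1 1 1 y] R show ?thesis unfolding xy by simp
qed

lemma descent_class_iterate_add_P0:
  "(odd n \<longrightarrow> descent_class 6 2 3 ((ec_add P0 ^^ n) None)) \<and>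
   (even n \<longrightarrow> (ec_add P0 ^^ n) None = None \<or> descent_class 1 1 1 ((ec_add P0 ^^ n) None))"
  by (induction n) (auto dest: descent_class_odd_add_P0 intro: descent_class_even_add_P0)

lemma descent_class_odd_multiple:
  assumes "odd k"
  shows "descent_class 6 2 3 (ec_mult k P0)"
proof (cases "k \<ge> 0")
  case True
  then show ?thesis using assms descent_class_iterate_add_P0[of "nat k"] by (simp add: ec_mult_def even_nat_iff)
next
  case False
  then have "descent_class 6 2 3 ((ec_add P0 ^^ nat (- k)) None)"
    using assms descent_class_iterate_add_P0[of "nat (- k)"] by (simp add: even_nat_iff)
  then show ?thesis using False by (auto simp: ec_mult_def descent_class_def ec_neg_def)
qed

section \<open>Reduction modulo \<open>q\<close>\<close>

lemma fq_div_ex1: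
  fixes q :: int
  assumes "prime q" and "\<not> q dvd b"
  shows "\<exists>!c. c \<in> {0..<q} \<and> [b * c = a] (mod q)"
proof -
  have "coprime b q" using prime_imp_coprime[OF assms] by (simp add: ac_simps)
  then obtain u where u: "[b * u = 1] (mod q)" using cong_solve_coprime_int by blast
  have "[b * ((a * u) mod q) = b * (a * u)] (mod q)" by (intro cong_mult cong_refl) simp
  also have "b * (a * u) = (b * u) * a" by (simp add: ac_simps)
  also have "[(b * u) * a = 1 * a] (mod q)" by (intro cong_mult u cong_refl)
  finally have "[b * ((a * u) mod q) = a] (mod q)" by simp
  moreover have "(a * u) mod q \<in> {0..<q}" using prime_gt_0_int[OF assms(1)] by simp
  moreover have "c = c'" if "c \<in> {0..<q}" "c' \<in> {0..<q}" "[b * c = a] (mod q)" "[b * c' = a] (mod q)"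
    for c c'
  proof -
    have "[b * c = b * c'] (mod q)" using that(3,4) by (meson cong_sym cong_trans)
    then have "[c = c'] (mod q)" using cong_mult_lcancel[OF \<open>coprime b q\<close>] by simp
    then show ?thesis using cong_less_imp_eq_int that(1,2) by auto
  qed
  ultimately show ?thesis by blast
qed

lemma fq_div_spec:
  fixes q :: int
  assumes "prime q" and "\<not> q dvd b"
  shows "fq_div q a b \<in> {0..<q}" and "[b * fq_div q a b = a] (mod q)"
  using theI'[OF fq_div_ex1[OF assms, of a]] unfolding fq_div_def by auto

lemma fq_div_eqI:
  fixes q :: int
  assumes "prime q" and "\<not> q dvd b" and "c \<in> {0..<q}" and "[b * c = a] (mod q)"
  shows "fq_div q a b = c"
  unfolding fq_div_def using fq_div_ex1[OF assms(1,2)] assms(3,4) by (simp add: the1_equality)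

lemma quotient_of_denom_dvd:
  assumes "quotient_of r = (N, M)" and "r = of_int n / of_int d" and "d \<noteq> 0"
  shows "M dvd d"
proof -
  have "M > 0" using quotient_of_denom_pos[OF assms(1)] .
  then have "(of_int (N * d) :: rat) = of_int (n * M)"
    using quotient_of_div[OF assms(1)] assms(2,3) by (simp add: field_simps)
  then have "M dvd N * d" by (metis dvd_triv_right of_int_eq_iff)
  then show ?thesis
    using quotient_of_coprime[OF assms(1)] by (simp add: coprime_commute coprime_dvd_mult_right_iff)
qed

lemma q_integral_iff:
  fixes q :: int
  assumes "prime q"
  shows "q_integral q r \<longleftrightarrow> (\<exists>n d. \<not> q dvd d \<and> r = of_int n / of_int d)"
proof
  assume "q_integral q r"
  then show "\<exists>n d. \<not> q dvd d \<and> r = of_int n / of_int d"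
    unfolding q_integral_def by (metis prod.collapse quotient_of_div)
next
  assume "\<exists>n d. \<not> q dvd d \<and> r = of_int n / of_int d"
  then obtain n d where "\<not> q dvd d" "r = of_int n / of_int d" by blast
  moreover obtain N M where NM: "quotient_of r = (N, M)" by (cases "quotient_of r")
  ultimately have "\<not> q dvd M" using quotient_of_denom_dvd by (metis dvd_0_right dvd_trans)
  then show "q_integral q r" unfolding q_integral_def NM by simp
qed

lemma rat_mod_in_range:
  fixes q :: int
  assumes "prime q" and "q_integral q r"
  shows "rat_mod q r \<in> {0..<q}"
  using assms fq_div_spec(1) unfolding rat_mod_def q_integral_def by blast

lemma rat_mod_cong:
  fixes q :: int
  assumes "prime q" and "\<not> q dvd d" and "r = of_int n / of_int d"
  shows "[rat_mod q r * d = n] (mod q)"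
proof -
  obtain N M where NM: "quotient_of r = (N, M)" by (cases "quotient_of r")
  have "\<not> q dvd M" using assms quotient_of_denom_dvd[OF NM] by (metis dvd_0_right dvd_trans)
  have "M > 0" using quotient_of_denom_pos[OF NM] .
  have "d \<noteq> 0" using assms(2) by auto
  then have ND: "N * d = n * M"
    using quotient_of_div[OF NM] assms(3) \<open>M > 0\<close> by (simp add: field_simps flip: of_int_mult)
  have rm: "rat_mod q r = fq_div q N M" unfolding rat_mod_def NM by simp
  have "[M * (rat_mod q r * d) = (M * rat_mod q r) * d] (mod q)" by (simp add: ac_simps)
  also have "[(M * rat_mod q r) * d = N * d] (mod q)"
    unfolding rm by (intro cong_mult fq_div_spec(2)[OF assms(1) \<open>\<not> q dvd M\<close>] cong_refl)
  also have "N * d = M * n" using ND by (simp add: ac_simps)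
  finally show ?thesis
    using prime_imp_coprime[OF assms(1) \<open>\<not> q dvd M\<close>] by (simp add: cong_mult_lcancel coprime_commute)
qed

lemma rat_mod_congI:
  fixes q :: int
  assumes "prime q" and "\<not> q dvd d" and "r = of_int n / of_int d" and "[c * d = n] (mod q)"
  shows "[rat_mod q r = c] (mod q)"
proof -
  have "[rat_mod q r * d = c * d] (mod q)"
    using rat_mod_cong[OF assms(1-3)] assms(4) by (meson cong_sym cong_trans)
  then show ?thesis
    using prime_imp_coprime[OF assms(1,2)] by (simp add: cong_mult_rcancel coprime_commute)
qed

lemma
  fixes q :: int
  assumes "prime q" and "q_integral q r" and "q_integral q s"
  shows q_integral_add: "q_integral q (r + s)" and rat_mod_add: "[rat_mod q (r + s) = rat_mod q r + rat_mod q s] (mod q)"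
    and q_integral_mult: "q_integral q (r * s)" and rat_mod_mult: "[rat_mod q (r * s) = rat_mod q r * rat_mod q s] (mod q)"
proof -
  obtain n d m e where d: "\<not> q dvd d" "r = of_int n / of_int d" and e: "\<not> q dvd e" "s = of_int m / of_int e"
    using assms q_integral_iff by meson
  have de: "\<not> q dvd d * e" using d(1) e(1) prime_dvd_mult_iff[OF assms(1)] by blast
  have "d \<noteq> 0" "e \<noteq> 0" using d(1) e(1) by auto
  then have sum: "r + s = of_int (n * e + m * d) / of_int (d * e)" and prod: "r * s = of_int (n * m) / of_int (d * e)"
    using d(2) e(2) by (simp_all add: field_simps)
  show "q_integral q (r + s)" "q_integral q (r * s)"
    using sum prod de q_integral_iff[OF assms(1)] by blast+
  have cd: "[rat_mod q r * d = n] (mod q)" and ce: "[rat_mod q s * e = m] (mod q)"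
    using rat_mod_cong[OF assms(1)] d e by blast+
  have "[(rat_mod q r + rat_mod q s) * (d * e) = (rat_mod q r * d) * e + (rat_mod q s * e) * d] (mod q)"
    by (simp add: algebra_simps)
  also have "[(rat_mod q r * d) * e + (rat_mod q s * e) * d = n * e + m * d] (mod q)"
    by (intro cong_add cong_mult cd ce cong_refl)
  finally show "[rat_mod q (r + s) = rat_mod q r + rat_mod q s] (mod q)"
    by (rule rat_mod_congI[OF assms(1) de sum])
  have "[(rat_mod q r * rat_mod q s) * (d * e) = (rat_mod q r * d) * (rat_mod q s * e)] (mod q)"
    by (simp add: algebra_simps)
  also have "[(rat_mod q r * d) * (rat_mod q s * e) = n * m] (mod q)"
    by (intro cong_mult cd ce)
  finally show "[rat_mod q (r * s) = rat_mod q r * rat_mod q s] (mod q)"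
    by (rule rat_mod_congI[OF assms(1) de prod])
qed

lemma q_integral_of_int: "prime (q::int) \<Longrightarrow> q_integral q (of_int n)"
  using not_prime_unit unfolding q_integral_def by auto

lemma rat_mod_of_int: "prime (q::int) \<Longrightarrow> [rat_mod q (of_int n) = n] (mod q)"
  using rat_mod_congI[of q 1 "of_int n" n n] not_prime_unit by auto

lemma q_integral_of_scaled_square:
  fixes q c :: int
  assumes q: "prime q" and "\<not> q dvd c" and "q_integral q (of_int c * a^2)"
  shows "q_integral q a"
proof -
  obtain n d where nd: "quotient_of a = (n, d)" by (cases "quotient_of a")
  have "d > 0" and cop: "coprime n d" and a: "a = of_int n / of_int d"
    using quotient_of_denom_pos[OF nd] quotient_of_coprime[OF nd] quotient_of_div[OF nd] by auto
  obtain m e where "\<not> q dvd e" and me: "of_int c * a^2 = of_int m / of_int e"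
    using assms(3) q_integral_iff[OF q] by blast
  then have "e \<noteq> 0" by auto
  then have "(of_int (c * n^2 * e) :: rat) = of_int (m * d^2)"
    using me \<open>d > 0\<close> unfolding a by (simp add: field_simps power2_eq_square)
  then have eq: "c * n^2 * e = m * d^2" by (simp only: of_int_eq_iff)
  have "\<not> q dvd d"
  proof
    assume "q dvd d"
    then have "q dvd c * n^2 * e" unfolding eq by (simp add: power2_eq_square)
    then have "q dvd n" using \<open>\<not> q dvd c\<close> \<open>\<not> q dvd e\<close> by (simp add: prime_dvd_mult_iff[OF q] prime_dvd_power_iff[OF q])
    with \<open>q dvd d\<close> cop q show False by (meson coprime_common_divisor not_prime_unit)
  qed
  then show ?thesis unfolding q_integral_def nd by simp
qed

lemma rat_mod_scaled_square:
  fixes q c s :: int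
  assumes q: "prime q" and "\<not> q dvd c" and x: "q_integral q x" and "x = of_int c * a^2 + of_int s"
  shows "[rat_mod q x = c * (rat_mod q a)^2 + s] (mod q)"
proof -
  have "of_int c * a^2 = x + of_int (- s)" using assms(4) by simp
  then have "q_integral q a"
    using q_integral_of_scaled_square[OF q \<open>\<not> q dvd c\<close>] q_integral_add[OF q x q_integral_of_int[OF q]] by metis
  then have ints: "q_integral q (of_int c)" "q_integral q (a * a)" "q_integral q (of_int c * (a * a))"
    using q_integral_of_int[OF q] q_integral_mult[OF q] by blast+
  have "[rat_mod q x = rat_mod q (of_int c * (a * a)) + rat_mod q (of_int s)] (mod q)"
    using rat_mod_add[OF q ints(3) q_integral_of_int[OF q]] assms(4) by (simp add: power2_eq_square)
  also have "[rat_mod q (of_int c * (a * a)) + rat_mod q (of_int s) = c * (rat_mod q a * rat_mod q a) + s] (mod q)"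
    by (intro cong_add rat_mod_of_int[OF q] cong_trans[OF rat_mod_mult[OF q ints(1,2)]]
        cong_mult rat_mod_mult[OF q \<open>q_integral q a\<close> \<open>q_integral q a\<close>])
  finally show ?thesis by (simp add: power2_eq_square)
qed

lemma red_on_E1:
  fixes q :: int
  assumes q: "prime q" and red: "red q (Some (x, y)) = Some (r, s)" and on: "y^2 = x * (x + 2) * (x + 6)"
  shows "[s^2 = r * (r + 2) * (r + 6)] (mod q)"
proof -
  have x: "q_integral q x" and y: "q_integral q y" and "r = rat_mod q x" "s = rat_mod q y"
    using red by (auto simp: red_def split: if_splits)
  have add: "q_integral q (x + of_int k)" "[rat_mod q (x + of_int k) = r + k] (mod q)" for k
    using q_integral_add[OF q x q_integral_of_int[OF q]] \<open>r = rat_mod q x\<close>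
      cong_trans[OF rat_mod_add[OF q x q_integral_of_int[OF q]] cong_add[OF cong_refl rat_mod_of_int[OF q]]]
    by auto
  have "[s^2 = rat_mod q (y * y)] (mod q)"
    using rat_mod_mult[OF q y y] \<open>s = rat_mod q y\<close> by (simp add: power2_eq_square cong_sym)
  also have "y * y = (x * (x + of_int 2)) * (x + of_int 6)" using on by (simp add: power2_eq_square)
  also have "[rat_mod q ((x * (x + of_int 2)) * (x + of_int 6)) = r * (r + 2) * (r + 6)] (mod q)"
    by (intro cong_trans[OF rat_mod_mult[OF q q_integral_mult[OF q x add(1)] add(1)]]
        cong_mult cong_trans[OF rat_mod_mult[OF q x add(1)]] add(2))
      (simp add: \<open>r = rat_mod q x\<close>)
  finally show ?thesis .
qed

lemma cong_square_of_scaled_square: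
  fixes q c s t :: int
  assumes q: "prime q" and "coprime c q" and x: "q_integral q x" and "x = of_int c * a^2 + of_int s"
    and "[rat_mod q x = c * t + s] (mod q)"
  shows "[(rat_mod q a)^2 = t] (mod q)"
proof -
  have "\<not> q dvd c" using \<open>coprime c q\<close> q by (metis coprime_absorb_right coprime_commute not_prime_unit)
  have "[c * (rat_mod q a)^2 + s = rat_mod q x] (mod q)"
    using rat_mod_scaled_square[OF q \<open>\<not> q dvd c\<close> x assms(4)] by (rule cong_sym)
  also note \<open>[rat_mod q x = c * t + s] (mod q)\<close>
  finally show ?thesis using \<open>coprime c q\<close> by (simp add: cong_add_rcancel cong_mult_lcancel)
qed

section \<open>Points of \<open>C\<^sub>D\<close> modulo a prime divisor of \<open>D\<close>\<close>

lemma phi_q_on_CD_x_coord: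
  fixes q D :: int
  assumes q: "prime q" and "q dvd D" and v: "v \<in> CD_Fq D q" and "v 4 \<noteq> 0"
  shows "\<exists>b. phi_q q v = Some ((-18) mod q, b)"
proof -
  have v4: "v 4 \<in> {0..<q}" and e1: "q dvd v 0 ^ 2 - 2 * v 1 ^ 2 + v 2 ^ 2"
    and e2: "q dvd v 1 ^ 2 - 2 * v 2 ^ 2 + D * v 3 ^ 2" and e3: "q dvd v 2 ^ 2 - 2 * D * v 3 ^ 2 + v 4 ^ 2"
    using v unfolding CD_Fq_def by (auto simp: cong_iff_dvd_diff)
  have "\<not> q dvd v 4" using v4 \<open>v 4 \<noteq> 0\<close> zdvd_imp_le by fastforce
  then have nv4: "\<not> q dvd v 4 ^ 2" using prime_dvd_power_iff[OF q] by simp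
  have "6 * v 0 ^ 2 - v 4 ^ 2 * (-18) =
      6 * (v 0 ^ 2 - 2 * v 1 ^ 2 + v 2 ^ 2) + 12 * (v 1 ^ 2 - 2 * v 2 ^ 2 + D * v 3 ^ 2)
      + 18 * (v 2 ^ 2 - 2 * D * v 3 ^ 2 + v 4 ^ 2) + D * (24 * v 3 ^ 2)"
    by (simp add: algebra_simps)
  also have "q dvd \<dots>"
    by (intro dvd_add dvd_mult e1 e2 e3 dvd_mult2[OF \<open>q dvd D\<close>])
  finally have "[6 * v 0 ^ 2 = v 4 ^ 2 * (-18)] (mod q)" by (simp only: cong_iff_dvd_diff)
  then have "[v 4 ^ 2 * ((-18) mod q) = 6 * v 0 ^ 2] (mod q)"
    by (simp add: cong_sym_eq mod_mult_right_eq cong_def)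
  then have "fq_div q (6 * v 0 ^ 2) (v 4 ^ 2) = (-18) mod q"
    using fq_div_eqI[OF q nv4] prime_gt_0_int[OF q] by simp
  then show ?thesis unfolding phi_q_def by simp
qed

lemma cong_square_imp_cong_pm:
  fixes p a b :: int
  assumes "prime p" and "[a^2 = b^2] (mod p)"
  shows "[a = b] (mod p) \<or> [a = - b] (mod p)"
proof -
  have "p dvd (a - b) * (a + b)"
    using assms(2) by (simp add: cong_iff_dvd_diff algebra_simps power2_eq_square)
  then show ?thesis using assms(1) by (simp add: cong_iff_dvd_diff prime_dvd_mult_iff)
qed

lemma phi_q_image_of_cong:
  fixes q D w0 w1 w2 w4 b :: int
  assumes q: "prime q" and "q dvd D" and "\<not> q dvd w2"
    and w1: "[w1^2 = 2 * w2^2] (mod q)" and w0: "[w0^2 = 3 * w2^2] (mod q)"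
    and w4: "[w4^2 = - (w2^2)] (mod q)"
    and "b \<in> {0..<q}" and y: "[w4^3 * b = 24 * w0 * w1 * w2] (mod q)"
  shows "Some ((-18) mod q, b) \<in> phi_q_image D q"
proof -
  define v where "v = (\<lambda>j. (if j \<le> 4 then [w0, w1, w2, 0, w4] ! j else 0) mod q)"
  have v0: "[v 0 = w0] (mod q)" and v1: "[v 1 = w1] (mod q)" and v2: "[v 2 = w2] (mod q)"
    and v3: "v 3 = 0" and v4: "[v 4 = w4] (mod q)" and "v 4 = w4 mod q"
    by (simp_all add: v_def cong_def)
  have "\<not> q dvd w4"
  proof
    assume "q dvd w4"
    then have "[w2^2 = 0] (mod q)"
      using w4 by (simp add: cong_iff_dvd_diff power2_eq_square dvd_add_right_iff)
    then show False using \<open>\<not> q dvd w2\<close> q by (simp add: cong_0_iff prime_dvd_power_iff)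
  qed
  then have "v 4 \<noteq> 0" using \<open>v 4 = w4 mod q\<close> by (simp add: dvd_eq_mod_eq_0)
  have "[v 0 ^ 2 - 2 * v 1 ^ 2 + v 2 ^ 2 = w0 ^ 2 - 2 * w1 ^ 2 + w2 ^ 2] (mod q)"
    by (intro cong_add cong_diff cong_mult cong_pow cong_refl v0 v1 v2)
  also have "[w0 ^ 2 - 2 * w1 ^ 2 + w2 ^ 2 = 3 * w2^2 - 2 * (2 * w2^2) + w2 ^ 2] (mod q)"
    by (intro cong_add cong_diff cong_mult cong_refl w0 w1)
  finally have e1: "[v 0 ^ 2 - 2 * v 1 ^ 2 + v 2 ^ 2 = 0] (mod q)" by simp
  have "[v 1 ^ 2 - 2 * v 2 ^ 2 + D * v 3 ^ 2 = w1 ^ 2 - 2 * w2 ^ 2 + D * 0 ^ 2] (mod q)"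
    unfolding v3 by (intro cong_add cong_diff cong_mult cong_pow cong_refl v1 v2)
  also have "[w1 ^ 2 - 2 * w2 ^ 2 + D * 0 ^ 2 = 0] (mod q)" using w1 by (simp add: cong_iff_dvd_diff)
  finally have e2: "[v 1 ^ 2 - 2 * v 2 ^ 2 + D * v 3 ^ 2 = 0] (mod q)" .
  have "[v 2 ^ 2 - 2 * D * v 3 ^ 2 + v 4 ^ 2 = w2 ^ 2 - 2 * D * 0 ^ 2 + w4 ^ 2] (mod q)"
    unfolding v3 by (intro cong_add cong_diff cong_mult cong_pow cong_refl v2 v4)
  also have "[w2 ^ 2 - 2 * D * 0 ^ 2 + w4 ^ 2 = 0] (mod q)" using w4 by (simp add: cong_iff_dvd_diff add.commute)
  finally have e3: "[v 2 ^ 2 - 2 * D * v 3 ^ 2 + v 4 ^ 2 = 0] (mod q)" .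
  moreover have "\<forall>i\<le>4. v i \<in> {0..<q}" and "\<forall>i>4. v i = 0"
    using prime_gt_0_int[OF q] by (simp_all add: v_def)
  ultimately have "v \<in> CD_Fq D q"
    unfolding CD_Fq_def using e1 e2 \<open>v 4 \<noteq> 0\<close> by blast
  then obtain b' where x: "phi_q q v = Some ((-18) mod q, b')"
    using phi_q_on_CD_x_coord[OF q \<open>q dvd D\<close> \<open>v \<in> CD_Fq D q\<close> \<open>v 4 \<noteq> 0\<close>] by blast
  have "\<not> q dvd v 4 ^ 3"
    using \<open>\<not> q dvd w4\<close> \<open>v 4 = w4 mod q\<close> q by (simp add: prime_dvd_power_iff dvd_mod_iff)
  moreover have "[v 4 ^ 3 * b = 24 * v 0 * v 1 * v 2] (mod q)"
    using cong_trans[OF cong_trans[OF cong_mult[OF cong_pow[OF v4] cong_refl] y]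
        cong_sym[OF cong_mult[OF cong_mult[OF cong_mult[OF cong_refl v0] v1] v2]]] .
  ultimately have "fq_div q (24 * v 0 * v 1 * v 2) (v 4 ^ 3) = b"
    using fq_div_eqI[OF q] \<open>b \<in> {0..<q}\<close> by blast
  then have "phi_q q v = Some ((-18) mod q, b)" using x unfolding phi_q_def by simp
  then show ?thesis
    unfolding phi_q_image_def using \<open>v \<in> CD_Fq D q\<close> \<open>v 4 \<noteq> 0\<close> by (auto intro!: exI[of _ v])
qed

lemma phi_q_image_of_square_roots:
  fixes q D \<alpha> \<beta> \<gamma> b :: int
  assumes q: "prime q" and "q dvd D" and "\<not> q dvd 2"
    and \<alpha>: "[\<alpha>^2 = -3] (mod q)" and \<beta>: "[\<beta>^2 = -8] (mod q)" and \<gamma>: "[\<gamma>^2 = -4] (mod q)"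
    and "b \<in> {0..<q}" and y: "[b^2 = -3456] (mod q)"
  shows "Some ((-18) mod q, b) \<in> phi_q_image D q"
proof -
  have "((2 * \<gamma>)^3 * b)^2 = 64 * (\<gamma>^2)^3 * b^2" by (simp add: algebra_simps power_mult_distrib flip: power_mult)
  also have "[64 * (\<gamma>^2)^3 * b^2 = 64 * (-4)^3 * (-3456)] (mod q)" by (intro cong_mult cong_pow cong_refl \<gamma> y)
  also have "64 * (-4)^3 * (-3456) = 36864 * (-3) * (-8) * (-4::int)^2" by simp
  also have "[36864 * (-3) * (-8) * (-4)^2 = 36864 * \<alpha>^2 * \<beta>^2 * (\<gamma>^2)^2] (mod q)"
    by (intro cong_mult cong_pow cong_refl cong_sym[OF \<alpha>] cong_sym[OF \<beta>] cong_sym[OF \<gamma>])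
  also have "36864 * \<alpha>^2 * \<beta>^2 * (\<gamma>^2)^2 = (24 * (2 * \<alpha> * \<gamma>) * (\<beta> * \<gamma>) * 4)^2"
    by (simp add: algebra_simps power_mult_distrib flip: power_mult)
  finally have "[(2 * \<gamma>)^3 * b = 24 * (2 * \<alpha> * \<gamma>) * (\<beta> * \<gamma>) * 4] (mod q) \<or>
      [(2 * \<gamma>)^3 * b = 24 * (- (2 * \<alpha> * \<gamma>)) * (\<beta> * \<gamma>) * 4] (mod q)"
    using cong_square_imp_cong_pm[OF q] by simp
  \<comment> \<open>The sign of \<open>x\<^sub>0\<close> is free, and it fixes the sign of the \<open>y\<close>-coordinate.\<close>
  then obtain w0 where y': "[(2 * \<gamma>)^3 * b = 24 * w0 * (\<beta> * \<gamma>) * 4] (mod q)"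
    and "w0^2 = (2 * \<alpha> * \<gamma>)^2" by (metis power2_minus)
  show ?thesis
  proof (rule phi_q_image_of_cong[OF q \<open>q dvd D\<close> _ _ _ _ \<open>b \<in> {0..<q}\<close> y'])
    show "\<not> q dvd 4" using \<open>\<not> q dvd 2\<close> prime_dvd_mult_iff[OF q, of 2 2] by simp
    have "(\<beta> * \<gamma>)^2 = \<beta>^2 * \<gamma>^2" by (simp add: power_mult_distrib)
    also have "[\<beta>^2 * \<gamma>^2 = (-8) * (-4)] (mod q)" by (intro cong_mult \<beta> \<gamma>)
    finally show "[(\<beta> * \<gamma>)^2 = 2 * 4^2] (mod q)" by simp
    have "w0^2 = 4 * \<alpha>^2 * \<gamma>^2" using \<open>w0^2 = (2 * \<alpha> * \<gamma>)^2\<close> by (simp add: power_mult_distrib)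
    also have "[4 * \<alpha>^2 * \<gamma>^2 = 4 * (-3) * (-4)] (mod q)" by (intro cong_mult cong_refl \<alpha> \<gamma>)
    finally show "[w0^2 = 3 * 4^2] (mod q)" by simp
    have "(2 * \<gamma>)^2 = 4 * \<gamma>^2" by (simp add: power_mult_distrib)
    also have "[4 * \<gamma>^2 = 4 * (-4)] (mod q)" by (intro cong_mult cong_refl \<gamma>)
    finally show "[(2 * \<gamma>)^2 = - (4^2)] (mod q)" by simp
  qed
qed

lemma red_odd_multiple_in_phi_q_image:
  fixes q D k b :: int
  assumes q: "prime q" and "q > 3" and "q dvd D" and "odd k"
    and red: "red q (ec_mult k P0) = Some ((-18) mod q, b)"
  shows "red q (ec_mult k P0) \<in> phi_q_image D q"
proof -
  obtain x y u v w where xy: "ec_mult k P0 = Some (x, y)" and on: "y^2 = x * (x + 2) * (x + 6)"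
    and abc: "x = of_int 6 * u^2 + of_int 0" "x = of_int 2 * v^2 + of_int (-2)" "x = of_int 3 * w^2 + of_int (-6)"
    using descent_class_odd_multiple[OF \<open>odd k\<close>]
    unfolding descent_class_def scaled_square_def by (auto simp: algebra_simps)
  have "q_integral q x" and x: "[rat_mod q x = -18] (mod q)" and "q_integral q y" and "b = rat_mod q y"
    using red unfolding xy by (auto simp: red_def cong_def split: if_splits)
  then have "b \<in> {0..<q}" using rat_mod_in_range[OF q] by simp
  have "\<not> q dvd 2" "\<not> q dvd 3" using \<open>q > 3\<close> zdvd_imp_le[of q 2] zdvd_imp_le[of q 3] by auto
  then have "coprime 2 q" "coprime 3 q" using prime_imp_coprime[OF q] coprime_commute by blast+
  then have cop: "coprime 2 q" "coprime 3 q" "coprime 6 q" using coprime_mult_left_iff[of 2 3 q] by auto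
  have "[rat_mod q x = 6 * (-3) + 0] (mod q)" "[rat_mod q x = 2 * (-8) + (-2)] (mod q)"
    "[rat_mod q x = 3 * (-4) + (-6)] (mod q)" using x by simp_all
  then have "[(rat_mod q u)^2 = -3] (mod q)" "[(rat_mod q v)^2 = -8] (mod q)" "[(rat_mod q w)^2 = -4] (mod q)"
    using cong_square_of_scaled_square[OF q cop(3) \<open>q_integral q x\<close> abc(1)]
      cong_square_of_scaled_square[OF q cop(1) \<open>q_integral q x\<close> abc(2)]
      cong_square_of_scaled_square[OF q cop(2) \<open>q_integral q x\<close> abc(3)] by blast+
  then obtain \<alpha> \<beta> \<gamma> where \<alpha>: "[\<alpha>^2 = -3] (mod q)" and \<beta>: "[\<beta>^2 = -8] (mod q)" and \<gamma>: "[\<gamma>^2 = -4] (mod q)"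
    by blast
  have "[b^2 = ((-18) mod q) * ((-18) mod q + 2) * ((-18) mod q + 6)] (mod q)"
    using red_on_E1[OF q red[unfolded xy] on] .
  also have "[((-18) mod q) * ((-18) mod q + 2) * ((-18) mod q + 6) = (-18) * (-18 + 2) * (-18 + 6)] (mod q)"
    by (intro cong_mult cong_add cong_refl) (simp_all add: cong_def)
  finally have "[b^2 = -3456] (mod q)" by simp
  then show ?thesis
    using phi_q_image_of_square_roots[OF q \<open>q dvd D\<close> \<open>\<not> q dvd 2\<close> \<alpha> \<beta> \<gamma> \<open>b \<in> {0..<q}\<close>] red by simp
qed

lemma H_D_q_eq:
  fixes q D :: int
  assumes "prime q" and "q > 3" and "q dvd D"
  shows "H_D_q D q = {ec_mult k P0 | k. odd k \<and> (\<exists>b. red q (ec_mult k P0) = Some ((-18) mod q, b))}"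
proof (intro equalityI subsetI)
  fix R assume "R \<in> H_D_q D q"
  then obtain k v where "R = ec_mult k P0" "odd k" "red q R = phi_q q v" "v \<in> CD_Fq D q" "v 4 \<noteq> 0"
    unfolding H_D_q_def H_def phi_q_image_def by auto
  then show "R \<in> {ec_mult k P0 | k. odd k \<and> (\<exists>b. red q (ec_mult k P0) = Some ((-18) mod q, b))}"
    using phi_q_on_CD_x_coord[OF assms(1,3)] by auto
next
  fix R assume "R \<in> {ec_mult k P0 | k. odd k \<and> (\<exists>b. red q (ec_mult k P0) = Some ((-18) mod q, b))}"
  then obtain k b where "R = ec_mult k P0" "odd k" "red q (ec_mult k P0) = Some ((-18) mod q, b)" by blast
  then show "R \<in> H_D_q D q"
    using red_odd_multiple_in_phi_q_image[OF assms] unfolding H_D_q_def H_def by blast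
qed

theorem proposition6p2:
  fixes D q :: int
  assumes "squarefree D" and "prime q" and "q > 3" and "q dvd D"
  shows "H_D_q D q = {ec_mult k P0 | k. odd k \<and> (\<exists>b. red q (ec_mult k P0) = Some ((-18) mod q, b))}
         \<and> (\<forall>D'. squarefree D' \<and> q dvd D' \<longrightarrow> H_D_q D' q = H_D_q D q)"
  using H_D_q_eq[OF assms(2,3,4)] H_D_q_eq[OF assms(2,3)] by auto

end
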